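(* Let $(X,d)$ be $\delta$-hyperbolic with base point $o$, let $\mathcal S$ be a $(1/100,C_0,D)$-Schottky set, and consider the pivotal-time construction below. If $P_n=\{k_1<\dots<k_p\}$ and $D\ge 6C_0+13\delta+1$, then for every $i=2,\dots,p$ the sequence $y^-_{k_i},\,y_{k_i},\,y^-_{n+1}$ is a $(2C_0+5\delta,\ D-6C_0-13\delta)$-chain.
   Context: Gromov product $(x|y)_z=\frac12(d(x,z)+d(z,y)-d(x,y))$. A sequence $x_0,\dots,x_n$ is a $(C,D)$-chain if $(x_{i-1}|x_{i+1})_{x_i}\le C$ for $1\le i\le n-1$ and $d(x_{i-1},x_i)\ge D$ for $1\le i\le n$. For $C\ge0$, $D'=2C+2\delta+1$, the chain shadow $\mathcal{CS}_x(y,C)$ is the set of $z$ for which there is a $(C,D')$-chain $x_0=x,x_1,\dots,x_n=z$ with $(x_0|x_1)_y\le C$. A finite set $\mathcal S$ of isometries is an $(\epsilon,C,D)$-Schottky set if for all $x,y\in X$: $\#\{s:(x|s y)_o\le C\}\ge(1-\epsilon)\#\mathcal S$, $\#\{s:(x|s^{-1}y)_o\le C\}\ge(1-\epsilon)\#\mathcal S$, and $d(o,so)\ge D$ for all $s\in\mathcal S$. Construction: fix isometries $u_0,u_1,\dots$ and elements $s_i=a_ib_i$ with $a_i,b_i\in\mathcal S$. Put $y_n^-=u_0s_1u_1\cdots s_{n-1}u_{n-1}o$, $y_n=u_0s_1u_1\cdots s_{n-1}u_{n-1}a_no$, $y_n^+=u_0s_1u_1\cdots s_{n-1}u_{n-1}a_nb_no$.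 Pivotal times: $P_0=\emptyset$; given $P_{n-1}$ let $k=\max P_{n-1}$ (and $k=0$, $y_0:=o$ if $P_{n-1}=\emptyset$). If the local geodesic condition $(y_k|y_n)_{y_n^-}\le C_0$, $(y_n^-|y_n^+)_{y_n}\le C_0$, $(y_n|y_{n+1}^-)_{y_n^+}\le C_0$ holds, set $P_n=P_{n-1}\cup\{n\}$; otherwise let $m$ be the largest element of $P_{n-1}$ with $y^-_{n+1}\in\mathcal{CS}_{y_m}(y_m^+,C_0+\delta)$ and set $P_n=P_{n-1}\cap\{1,\dots,m\}$ ($P_n=\emptyset$ if no such $m$). *)

theory Defs
  imports Main "HOL-Analysis.Analysis"
begin

definition gromov :: "'a::metric_space \<Rightarrow> 'a \<Rightarrow> 'a \<Rightarrow> real" where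
  "gromov x y z = (dist x z + dist z y - dist x y) / 2"

definition hyperbolic :: "real \<Rightarrow> 'a::metric_space itself \<Rightarrow> bool" where
  "hyperbolic \<delta> _ \<longleftrightarrow> (\<forall>x y z w::'a. gromov x z w \<ge> min (gromov x y w) (gromov y z w) - \<delta>)"

definition isometry :: "('a::metric_space \<Rightarrow> 'a) \<Rightarrow> bool" where
  "isometry f \<longleftrightarrow> bij f \<and> (\<forall>x y. dist (f x) (f y) = dist x y)"

definition is_chain :: "real \<Rightarrow> real \<Rightarrow> 'a::metric_space list \<Rightarrow> bool" where
  "is_chain C D xs \<longleftrightarrow>
     (\<forall>i. 1 \<le> i \<and> i + 1 < length xs \<longrightarrow> gromov (xs ! (i - 1)) (xs ! (i + 1)) (xs ! i) \<le> C) \<and>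
     (\<forall>i. 1 \<le> i \<and> i < length xs \<longrightarrow> dist (xs ! (i - 1)) (xs ! i) \<ge> D)"

definition chain_shadow :: "real \<Rightarrow> 'a::metric_space \<Rightarrow> 'a \<Rightarrow> real \<Rightarrow> 'a set" where
  "chain_shadow \<delta> x y C = {z. \<exists>xs. 2 \<le> length xs \<and> xs ! 0 = x \<and> last xs = z \<and>
      is_chain C (2 * C + 2 * \<delta> + 1) xs \<and> gromov (xs ! 0) (xs ! 1) y \<le> C}"

definition schottky :: "real \<Rightarrow> real \<Rightarrow> real \<Rightarrow> 'a::metric_space \<Rightarrow> ('a \<Rightarrow> 'a) set \<Rightarrow> bool" where
  "schottky \<epsilon> C D bp S \<longleftrightarrow> finite S \<and> (\<forall>s\<in>S. isometry s) \<and>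
     (\<forall>x y. real (card {s\<in>S. gromov x (s y) bp \<le> C}) \<ge> (1 - \<epsilon>) * real (card S)) \<and>
     (\<forall>x y. real (card {s\<in>S. gromov x (inv s y) bp \<le> C}) \<ge> (1 - \<epsilon>) * real (card S)) \<and>
     (\<forall>s\<in>S. dist bp (s bp) \<ge> D)"

text \<open>Prefix W n = u_0 s_1 u_1 ... s_{n-1} u_{n-1} (W 0 = id), with s_i = a_i b_i.\<close>
fun prefix :: "(nat \<Rightarrow> 'a \<Rightarrow> 'a) \<Rightarrow> (nat \<Rightarrow> 'a \<Rightarrow> 'a) \<Rightarrow> (nat \<Rightarrow> 'a \<Rightarrow> 'a) \<Rightarrow> nat \<Rightarrow> 'a \<Rightarrow> 'a" where
  "prefix u a b 0 = id"
| "prefix u a b (Suc n) = prefix u a b n \<circ> (if n = 0 then id else a n \<circ> b n) \<circ> u n"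

definition ym :: "'a \<Rightarrow> (nat \<Rightarrow> 'a \<Rightarrow> 'a) \<Rightarrow> (nat \<Rightarrow> 'a \<Rightarrow> 'a) \<Rightarrow> (nat \<Rightarrow> 'a \<Rightarrow> 'a) \<Rightarrow> nat \<Rightarrow> 'a" where
  "ym bp u a b n = prefix u a b n bp"

definition yy :: "'a \<Rightarrow> (nat \<Rightarrow> 'a \<Rightarrow> 'a) \<Rightarrow> (nat \<Rightarrow> 'a \<Rightarrow> 'a) \<Rightarrow> (nat \<Rightarrow> 'a \<Rightarrow> 'a) \<Rightarrow> nat \<Rightarrow> 'a" where
  "yy bp u a b n = prefix u a b n (a n bp)"

definition yp :: "'a \<Rightarrow> (nat \<Rightarrow> 'a \<Rightarrow> 'a) \<Rightarrow> (nat \<Rightarrow> 'a \<Rightarrow> 'a) \<Rightarrow> (nat \<Rightarrow> 'a \<Rightarrow> 'a) \<Rightarrow> nat \<Rightarrow> 'a" where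
  "yp bp u a b n = prefix u a b n (a n (b n bp))"

fun pivotal :: "real \<Rightarrow> real \<Rightarrow> 'a::metric_space \<Rightarrow> (nat \<Rightarrow> 'a \<Rightarrow> 'a) \<Rightarrow> (nat \<Rightarrow> 'a \<Rightarrow> 'a) \<Rightarrow> (nat \<Rightarrow> 'a \<Rightarrow> 'a) \<Rightarrow> nat \<Rightarrow> nat set" where
  "pivotal \<delta> C0 bp u a b 0 = {}"
| "pivotal \<delta> C0 bp u a b (Suc n) =
     (let P = pivotal \<delta> C0 bp u a b n;
          m = Suc n;
          yk = (if P = {} then bp else yy bp u a b (Max P))
      in if gromov yk (yy bp u a b m) (ym bp u a b m) \<le> C0
            \<and> gromov (ym bp u a b m) (yp bp u a b m) (yy bp u a b m) \<le> C0
            \<and> gromov (yy bp u a b m) (ym bp u a b (Suc m)) (yp bp u a b m) \<le> C0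
         then insert m P
         else (let M = {j \<in> P. ym bp u a b (Suc m) \<in> chain_shadow \<delta> (yy bp u a b j) (yp bp u a b j) (C0 + \<delta>)}
               in if M = {} then {} else P \<inter> {1..Max M}))"

end

theory Submission
  imports Defs
begin

text \<open>By induction on n one maintains an invariant of the pivotal times k_1 < ... < k_p:
  at each pivot the points y_k^-, y_k, y_k^+ are aligned up to C_0, consecutive pivots are
  aligned through y_k^+ and y_{k'}, and the last pivot is aligned with y_{n+1}^-. Appending a
  pivot preserves this by the local geodesic condition; backtracking to a pivot m preserves it
  because y_{n+1}^- lies in the chain shadow of y_m^+ seen from y_m, and shadows are controlled
  by Gromov products. Since all the jumps have length at least D, which is large compared with
  the constants, the standard concatenation lemma for Gromov products propagates the alignment
  from the last pivot back to any k, which yields the chain.\<close>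

lemma hyperbolicD:
  assumes "hyperbolic \<delta> TYPE('a::metric_space)"
  shows "min (gromov x y w) (gromov y z w) - \<delta> \<le> gromov (x::'a) z w"
  using assms unfolding hyperbolic_def by blast

lemma hyperbolic_nonneg:
  assumes "hyperbolic \<delta> TYPE('a::metric_space)"
  shows "0 \<le> \<delta>"
  using hyperbolicD[OF assms, of "undefined::'a" undefined undefined undefined]
  by (simp add: gromov_def)

lemma gromov_commute: "gromov x y z = gromov y x z"
  unfolding gromov_def by (simp add: dist_commute)

lemma gromov_le_add_gromov: "gromov x z y \<le> gromov x w y + gromov x z w"
  using dist_triangle[of y z w] unfolding gromov_def by (simp add: field_simps)

lemma dist_sub_gromov_le: "dist y p - gromov y w p \<le> dist y w"
  using dist_triangle[of y p w] unfolding gromov_def by (simp add: dist_commute field_simps)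

lemma gromov_concat:
  assumes hyp: "hyperbolic \<delta> TYPE('a::metric_space)"
    and "gromov (x::'a) p y \<le> A" "gromov y w p \<le> B" "E \<le> dist y p" "A + \<delta> < E - B"
  shows "gromov x w y \<le> A + \<delta>"
proof -
  have "gromov w p y = dist y p - gromov y w p"
    unfolding gromov_def by (simp add: dist_commute field_simps)
  then have "A + \<delta> < gromov w p y" using assms(3-5) by linarith
  moreover have "min (gromov x w y) (gromov w p y) - \<delta> \<le> gromov x p y"
    by (rule hyperbolicD[OF hyp])
  ultimately show ?thesis using assms(2) by (auto simp: min_def split: if_splits)
qed

lemma chain_gromov_last:
  assumes hyp: "hyperbolic \<delta> TYPE('a::metric_space)" and "0 \<le> C"
    and gromov_le: "\<And>i. 1 \<le> i \<Longrightarrow> i < N \<Longrightarrow> gromov (x (i - 1)) (x (i + 1)) (x i) \<le> C"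
    and dist_ge: "\<And>i. 1 \<le> i \<Longrightarrow> i \<le> N \<Longrightarrow> 2 * C + 2 * \<delta> + 1 \<le> dist (x (i - 1)) (x i)"
    and "i < N"
  shows "gromov ((x :: nat \<Rightarrow> 'a) i) (x N) (x (Suc i)) \<le> C + \<delta>"
  using \<open>i < N\<close>
proof (induction "N - Suc i" arbitrary: i)
  case 0
  then have "N = Suc i" by simp
  then show ?case using \<open>0 \<le> C\<close> hyperbolic_nonneg[OF hyp] by (simp add: gromov_def)
next
  case (Suc m)
  then have "Suc i < N" by simp
  have "gromov (x (Suc i)) (x N) (x (Suc (Suc i))) \<le> C + \<delta>"
    using Suc.hyps \<open>Suc i < N\<close> by simp
  moreover have "gromov (x i) (x (Suc (Suc i))) (x (Suc i)) \<le> C"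
    using gromov_le[of "Suc i"] \<open>Suc i < N\<close> by simp
  moreover have "2 * C + 2 * \<delta> + 1 \<le> dist (x (Suc i)) (x (Suc (Suc i)))"
    using dist_ge[of "Suc (Suc i)"] \<open>Suc i < N\<close> by simp
  ultimately show ?case using gromov_concat[OF hyp] by simp
qed

lemma chain_shadow_gromov_le:
  assumes hyp: "hyperbolic \<delta> TYPE('a::metric_space)"
    and "z \<in> chain_shadow \<delta> (x::'a) y C" and "0 \<le> C"
  shows "gromov x z y \<le> 2 * C + 2 * \<delta>"
proof -
  obtain xs where xs: "2 \<le> length xs" "xs ! 0 = x" "last xs = z"
    "is_chain C (2 * C + 2 * \<delta> + 1) xs" "gromov x (xs ! 1) y \<le> C"
    using assms(2) unfolding chain_shadow_def by auto
  have "gromov (xs ! 0) (xs ! (length xs - 1)) (xs ! Suc 0) \<le> C + \<delta>"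
    using xs(1,4) by (intro chain_gromov_last[OF hyp \<open>0 \<le> C\<close>]) (auto simp: is_chain_def)
  moreover have "last xs = xs ! (length xs - 1)" using xs(1) by (subst last_conv_nth) auto
  ultimately have "gromov x z (xs ! 1) \<le> C + \<delta>" using xs(2,3) by simp
  then show ?thesis
    using gromov_le_add_gromov[of x z y "xs ! 1"] xs(5) hyperbolic_nonneg[OF hyp] by linarith
qed

lemma is_chain_three:
  "is_chain C D [x, y, z] \<longleftrightarrow> gromov x z y \<le> C \<and> D \<le> dist x y \<and> D \<le> dist y z"
proof -
  have "1 \<le> i \<and> i + 1 < length [x, y, z] \<longleftrightarrow> i = 1"
    and "1 \<le> i \<and> i < length [x, y, z] \<longleftrightarrow> i = 1 \<or> i = 2" for i
    by auto
  then show ?thesis unfolding is_chain_def by (simp add: numeral_2_eq_2 all_conj_distrib)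
qed

lemma schottky_isometry: "schottky \<epsilon> C D bp S \<Longrightarrow> s \<in> S \<Longrightarrow> isometry s"
  unfolding schottky_def by blast

lemma schottky_displacement: "schottky \<epsilon> C D bp S \<Longrightarrow> s \<in> S \<Longrightarrow> D \<le> dist bp (s bp)"
  unfolding schottky_def by blast

lemma dist_prefix:
  assumes "\<And>i. isometry (u i)" "\<And>i. 1 \<le> i \<Longrightarrow> isometry (a i)" "\<And>i. 1 \<le> i \<Longrightarrow> isometry (b i)"
  shows "dist (prefix u a b n x) (prefix u a b n y) = dist (x::'a::metric_space) y"
  using assms by (induction n arbitrary: x y) (auto simp: isometry_def)

definition consecutive :: "nat set \<Rightarrow> nat \<Rightarrow> nat \<Rightarrow> bool" where
  "consecutive P k k' \<longleftrightarrow> k \<in> P \<and> k' \<in> P \<and> k < k' \<and> (\<forall>j\<in>P. k < j \<longrightarrow> k' \<le> j)"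

lemma consecutive_Min_greater:
  assumes "finite P" "k \<in> P" "k < Max P"
  shows "consecutive P k (Min {j\<in>P. k < j})"
proof -
  have "Max P \<in> {j\<in>P. k < j}" using assms by (auto intro: Max_in)
  then have "Min {j\<in>P. k < j} \<in> {j\<in>P. k < j}" using assms(1) by (intro Min_in) auto
  then show ?thesis unfolding consecutive_def using assms(1,2) by auto
qed

lemma consecutive_Max:
  assumes "finite P" "consecutive (insert m P) k m" "\<forall>j\<in>P. j < m"
  shows "k = Max P"
proof -
  have "k \<in> P" using assms(2,3) unfolding consecutive_def by auto
  then have "Max P \<in> P" "k \<le> Max P" using assms(1) by (auto intro: Max_in)
  then show ?thesis using assms(2,3) unfolding consecutive_def by (meson insertI2 leD le_neq_trans)
qed

locale pivotal_data =
  fixes \<delta> C0 :: real and bp :: "'a::metric_space" and u a b :: "nat \<Rightarrow> 'a \<Rightarrow> 'a"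
begin

abbreviation "Ym \<equiv> ym bp u a b"
abbreviation "Yc \<equiv> yy bp u a b"
abbreviation "Yp \<equiv> yp bp u a b"
abbreviation "PP \<equiv> pivotal \<delta> C0 bp u a b"

lemma pivotal_subset: "PP n \<subseteq> {1..n}"
  by (induction n) (auto simp: Let_def)

lemma finite_pivotal: "finite (PP n)"
  using finite_subset[OF pivotal_subset] by blast

lemma pivotal_ge_1: "k \<in> PP n \<Longrightarrow> 1 \<le> k"
  using pivotal_subset[of n] by fastforce

lemma pivotal_Suc_cases:
  obtains (extend)
    "PP n \<noteq> {} \<Longrightarrow> gromov (Yc (Max (PP n))) (Yc (Suc n)) (Ym (Suc n)) \<le> C0"
    "gromov (Ym (Suc n)) (Yp (Suc n)) (Yc (Suc n)) \<le> C0"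
    "gromov (Yc (Suc n)) (Ym (Suc (Suc n))) (Yp (Suc n)) \<le> C0"
    "PP (Suc n) = insert (Suc n) (PP n)"
  | (reset) "PP (Suc n) = {}"
  | (backtrack) m where "m \<in> PP n"
    "Ym (Suc (Suc n)) \<in> chain_shadow \<delta> (Yc m) (Yp m) (C0 + \<delta>)"
    "PP (Suc n) = PP n \<inter> {1..m}"
proof -
  define M where "M = {j \<in> PP n. Ym (Suc (Suc n)) \<in> chain_shadow \<delta> (Yc j) (Yp j) (C0 + \<delta>)}"
  define last_pivot where "last_pivot = (if PP n = {} then bp else Yc (Max (PP n)))"
  have P_Suc: "PP (Suc n) =
    (if gromov last_pivot (Yc (Suc n)) (Ym (Suc n)) \<le> C0
        \<and> gromov (Ym (Suc n)) (Yp (Suc n)) (Yc (Suc n)) \<le> C0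
        \<and> gromov (Yc (Suc n)) (Ym (Suc (Suc n))) (Yp (Suc n)) \<le> C0
     then insert (Suc n) (PP n) else if M = {} then {} else PP n \<inter> {1..Max M})"
    by (simp only: pivotal.simps(2) Let_def M_def last_pivot_def)
  show ?thesis
  proof (cases "gromov last_pivot (Yc (Suc n)) (Ym (Suc n)) \<le> C0
        \<and> gromov (Ym (Suc n)) (Yp (Suc n)) (Yc (Suc n)) \<le> C0
        \<and> gromov (Yc (Suc n)) (Ym (Suc (Suc n))) (Yp (Suc n)) \<le> C0")
    case True
    show ?thesis
    proof (rule extend)
      show "gromov (Yc (Max (PP n))) (Yc (Suc n)) (Ym (Suc n)) \<le> C0" if "PP n \<noteq> {}"
        using True that unfolding last_pivot_def by simp
      show "PP (Suc n) = insert (Suc n) (PP n)"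
        unfolding P_Suc if_P[OF True] ..
    qed (use True in auto)
  next
    case False
    show ?thesis
    proof (cases "M = {}")
      case True
      show ?thesis
        by (rule reset) (unfold P_Suc if_not_P[OF False] if_P[OF True], rule refl)
    next
      case M_nonempty: False
      have "finite M" unfolding M_def using finite_pivotal by auto
      then have "Max M \<in> M" using M_nonempty by (rule Max_in)
      show ?thesis
      proof (rule backtrack)
        show "Max M \<in> PP n" "Ym (Suc (Suc n)) \<in> chain_shadow \<delta> (Yc (Max M)) (Yp (Max M)) (C0 + \<delta>)"
          using \<open>Max M \<in> M\<close> unfolding M_def by auto
        show "PP (Suc n) = PP n \<inter> {1..Max M}"
          unfolding P_Suc if_not_P[OF False] if_not_P[OF M_nonempty] ..
      qed
    qed
  qed
qed

end

locale hyperbolic_pivotal = pivotal_data \<delta> C0 bp u a b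
  for \<delta> C0 D :: real and bp :: "'a::metric_space" and u a b :: "nat \<Rightarrow> 'a \<Rightarrow> 'a" +
  assumes hyp: "hyperbolic \<delta> TYPE('a)"
    and C0_nonneg: "0 \<le> C0"
    and u_isometry: "\<And>i. isometry (u i)"
    and a_isometry: "\<And>i. 1 \<le> i \<Longrightarrow> isometry (a i)"
    and b_isometry: "\<And>i. 1 \<le> i \<Longrightarrow> isometry (b i)"
    and a_displacement: "\<And>i. 1 \<le> i \<Longrightarrow> D \<le> dist bp (a i bp)"
    and b_displacement: "\<And>i. 1 \<le> i \<Longrightarrow> D \<le> dist bp (b i bp)"
    and D_large: "6 * C0 + 13 * \<delta> + 1 \<le> D"
begin

lemma delta_nonneg: "0 \<le> \<delta>"
  by (rule hyperbolic_nonneg[OF hyp])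

lemma dist_prefix_eq: "dist (prefix u a b n x) (prefix u a b n y) = dist x y"
  by (rule dist_prefix[OF u_isometry a_isometry b_isometry])

lemma dist_ym_yy: "1 \<le> k \<Longrightarrow> D \<le> dist (Ym k) (Yc k)"
  unfolding ym_def yy_def dist_prefix_eq by (rule a_displacement)

lemma dist_yy_yp: "1 \<le> k \<Longrightarrow> D \<le> dist (Yc k) (Yp k)"
  using a_isometry[of k] b_displacement[of k]
  unfolding yy_def yp_def dist_prefix_eq by (simp add: isometry_def)

definition pivotal_invariant :: "nat \<Rightarrow> bool" where
  "pivotal_invariant n \<longleftrightarrow>
     (\<forall>k\<in>PP n. gromov (Ym k) (Yp k) (Yc k) \<le> C0) \<and>
     (\<forall>k k'. consecutive (PP n) k k' \<longrightarrow>
        gromov (Yc k) (Yc k') (Yp k) \<le> 3 * C0 + 5 * \<delta> \<and> gromov (Yc k) (Yp k') (Yc k') \<le> C0 + \<delta>) \<and>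
     (PP n \<noteq> {} \<longrightarrow> gromov (Yc (Max (PP n))) (Ym (Suc n)) (Yp (Max (PP n))) \<le> 2 * C0 + 4 * \<delta>)"

lemma pivotal_invariantI:
  assumes "\<And>k. k \<in> PP n \<Longrightarrow> gromov (Ym k) (Yp k) (Yc k) \<le> C0"
    and "\<And>k k'. consecutive (PP n) k k' \<Longrightarrow>
      gromov (Yc k) (Yc k') (Yp k) \<le> 3 * C0 + 5 * \<delta> \<and> gromov (Yc k) (Yp k') (Yc k') \<le> C0 + \<delta>"
    and "PP n \<noteq> {} \<Longrightarrow> gromov (Yc (Max (PP n))) (Ym (Suc n)) (Yp (Max (PP n))) \<le> 2 * C0 + 4 * \<delta>"
  shows "pivotal_invariant n"
  using assms unfolding pivotal_invariant_def by blast

lemma pivotal_invariant_extend: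
  assumes inv: "pivotal_invariant n"
    and last_pivot: "PP n \<noteq> {} \<Longrightarrow> gromov (Yc (Max (PP n))) (Yc m) (Ym m) \<le> C0"
    and at_m: "gromov (Ym m) (Yp m) (Yc m) \<le> C0"
    and after_m: "gromov (Yc m) (Ym (Suc m)) (Yp m) \<le> C0"
    and m: "m = Suc n" "PP (Suc n) = insert m (PP n)"
  shows "pivotal_invariant (Suc n)"
proof -
  let ?P = "PP n"
  have below_m: "\<forall>j\<in>?P. j < m" using pivotal_subset m(1) by fastforce
  have new_pair: "gromov (Yc k) (Yc m) (Yp k) \<le> 3 * C0 + 5 * \<delta> \<and> gromov (Yc k) (Yp m) (Yc m) \<le> C0 + \<delta>"
    if "consecutive (insert m ?P) k m" for k
  proof -
    have k: "k = Max ?P" "?P \<noteq> {}"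
      using consecutive_Max[OF finite_pivotal that below_m] that
      unfolding consecutive_def by auto
    have "gromov (Yc k) (Ym m) (Yp k) \<le> 2 * C0 + 4 * \<delta>"
      using inv k m(1) unfolding pivotal_invariant_def by blast
    moreover have "gromov (Yc k) (Yc m) (Ym m) \<le> C0" using last_pivot k by simp
    ultimately have "gromov (Yc k) (Yc m) (Yp k) \<le> 3 * C0 + 5 * \<delta>"
      using gromov_le_add_gromov[of "Yc k" "Yc m" "Yp k" "Ym m"] delta_nonneg by linarith
    moreover have "gromov (Yp m) (Yc k) (Yc m) \<le> C0 + \<delta>"
    proof -
      have "gromov (Yp m) (Ym m) (Yc m) \<le> C0" using at_m by (simp add: gromov_commute)
      moreover have "gromov (Yc m) (Yc k) (Ym m) \<le> C0" using last_pivot k by (simp add: gromov_commute)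
      moreover have "D \<le> dist (Yc m) (Ym m)" using dist_ym_yy[of m] m(1) by (simp add: dist_commute)
      ultimately show ?thesis
        by (rule gromov_concat[OF hyp]) (use D_large C0_nonneg delta_nonneg in linarith)
    qed
    ultimately show ?thesis by (simp add: gromov_commute)
  qed
  have old_pair: "consecutive ?P k k'" if "consecutive (insert m ?P) k k'" "k' \<noteq> m" for k k'
    using that below_m unfolding consecutive_def by auto
  have "Max (insert m ?P) = m"
    using below_m finite_pivotal by (simp add: Max_insert2 less_imp_le)
  show ?thesis
  proof (rule pivotal_invariantI, unfold m(2))
    show "gromov (Ym k) (Yp k) (Yc k) \<le> C0" if "k \<in> insert m ?P" for k
      using that inv at_m unfolding pivotal_invariant_def by auto
    show "gromov (Yc k) (Yc k') (Yp k) \<le> 3 * C0 + 5 * \<delta> \<and> gromov (Yc k) (Yp k') (Yc k') \<le> C0 + \<delta>"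
      if pair: "consecutive (insert m ?P) k k'" for k k'
    proof (cases "k' = m")
      case True
      then show ?thesis using new_pair pair by simp
    next
      case False
      then show ?thesis using old_pair[OF pair] inv unfolding pivotal_invariant_def by blast
    qed
    show "gromov (Yc (Max (insert m ?P))) (Ym (Suc (Suc n))) (Yp (Max (insert m ?P)))
      \<le> 2 * C0 + 4 * \<delta>"
      using \<open>Max (insert m ?P) = m\<close> after_m m(1) C0_nonneg delta_nonneg by simp
  qed
qed

lemma pivotal_invariant_backtrack:
  assumes inv: "pivotal_invariant n" and "M \<in> PP n"
    and shadow: "Ym (Suc (Suc n)) \<in> chain_shadow \<delta> (Yc M) (Yp M) (C0 + \<delta>)"
    and P_Suc: "PP (Suc n) = PP n \<inter> {1..M}"
  shows "pivotal_invariant (Suc n)"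
proof (rule pivotal_invariantI, unfold P_Suc)
  show "gromov (Ym k) (Yp k) (Yc k) \<le> C0" if "k \<in> PP n \<inter> {1..M}" for k
    using that inv unfolding pivotal_invariant_def by blast
  show "gromov (Yc k) (Yc k') (Yp k) \<le> 3 * C0 + 5 * \<delta> \<and> gromov (Yc k) (Yp k') (Yc k') \<le> C0 + \<delta>"
    if "consecutive (PP n \<inter> {1..M}) k k'" for k k'
  proof -
    have "consecutive (PP n) k k'"
      using that pivotal_subset unfolding consecutive_def by (auto simp: subset_iff)
    then show ?thesis using inv unfolding pivotal_invariant_def by blast
  qed
  have "Max (PP n \<inter> {1..M}) = M"
    using \<open>M \<in> PP n\<close> pivotal_ge_1[OF \<open>M \<in> PP n\<close>] finite_pivotal by (intro Max_eqI) auto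
  then show "gromov (Yc (Max (PP n \<inter> {1..M}))) (Ym (Suc (Suc n))) (Yp (Max (PP n \<inter> {1..M})))
      \<le> 2 * C0 + 4 * \<delta>"
    using chain_shadow_gromov_le[OF hyp shadow] C0_nonneg delta_nonneg by simp
qed

lemma pivotal_invariant: "pivotal_invariant n"
proof (induction n)
  case 0
  then show ?case unfolding pivotal_invariant_def consecutive_def by simp
next
  case (Suc n)
  then show ?case
  proof (cases rule: pivotal_Suc_cases[of n])
    case extend
    then show ?thesis using pivotal_invariant_extend[OF Suc] by blast
  next
    case reset
    then show ?thesis unfolding pivotal_invariant_def consecutive_def by simp
  next
    case (backtrack m)
    then show ?thesis using pivotal_invariant_backtrack[OF Suc] by blast
  qed
qed

lemma consecutive_pivotal_gromov_le:
  assumes "consecutive (PP n) k k'"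
  shows "gromov (Yc k) (Ym (Suc n)) (Yc k') \<le> C0 + 3 * \<delta>"
  using assms
proof (induction "Max (PP n) - k'" arbitrary: k k' rule: less_induct)
  case less
  let ?P = "PP n" and ?z = "Ym (Suc n)"
  have inv: "pivotal_invariant n" by (rule pivotal_invariant)
  have "k' \<in> ?P" using less.prems unfolding consecutive_def by auto
  then have dist_k': "D \<le> dist (Yc k') (Yp k')" by (intro dist_yy_yp pivotal_ge_1)
  have to_k': "gromov (Yc k) (Yp k') (Yc k') \<le> C0 + \<delta>"
    using inv less.prems unfolding pivotal_invariant_def by blast
  show ?case
  proof (cases "k' = Max ?P")
    case True
    then have "gromov (Yc k') ?z (Yp k') \<le> 2 * C0 + 4 * \<delta>"
      using inv \<open>k' \<in> ?P\<close> unfolding pivotal_invariant_def by auto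
    then have "gromov (Yc k) ?z (Yc k') \<le> C0 + \<delta> + \<delta>"
      by (rule gromov_concat[OF hyp to_k' _ dist_k']) (use D_large C0_nonneg delta_nonneg in linarith)
    then show ?thesis using delta_nonneg by simp
  next
    case False
    then have "k' < Max ?P" using \<open>k' \<in> ?P\<close> finite_pivotal by (simp add: order_le_neq_trans)
    define k'' where "k'' = Min {j\<in>?P. k' < j}"
    have next_pair: "consecutive ?P k' k''"
      unfolding k''_def by (rule consecutive_Min_greater[OF finite_pivotal \<open>k' \<in> ?P\<close> \<open>k' < Max ?P\<close>])
    then have "Max ?P - k'' < Max ?P - k'"
      using finite_pivotal \<open>k' < Max ?P\<close> unfolding consecutive_def
      by (meson Max_ge diff_less_mono2 order_less_le_trans)
    then have IH: "gromov (Yc k') ?z (Yc k'') \<le> C0 + 3 * \<delta>"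
      using less.hyps next_pair by blast
    have k'_k'': "gromov (Yc k') (Yc k'') (Yp k') \<le> 3 * C0 + 5 * \<delta>"
      using inv next_pair unfolding pivotal_invariant_def by blast
    have to_k'': "gromov (Yc k) (Yc k'') (Yc k') \<le> C0 + \<delta> + \<delta>"
      by (rule gromov_concat[OF hyp to_k' k'_k'' dist_k']) (use D_large C0_nonneg delta_nonneg in linarith)
    have "D - (3 * C0 + 5 * \<delta>) \<le> dist (Yc k') (Yc k'')"
      using dist_sub_gromov_le[of "Yc k'" "Yp k'" "Yc k''"] dist_k' k'_k'' by linarith
    then have "gromov (Yc k) ?z (Yc k') \<le> C0 + \<delta> + \<delta> + \<delta>"
      by (rule gromov_concat[OF hyp to_k'' IH]) (use D_large C0_nonneg delta_nonneg in linarith)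
    then show ?thesis by simp
  qed
qed

lemma pivotal_gromov_le:
  assumes "k \<in> PP n"
  shows "gromov (Yc k) (Ym (Suc n)) (Yp k) \<le> 4 * C0 + 9 * \<delta>"
proof (cases "k = Max (PP n)")
  case True
  then show ?thesis
    using pivotal_invariant[of n] assms C0_nonneg delta_nonneg
    unfolding pivotal_invariant_def by fastforce
next
  case False
  then have "k < Max (PP n)" using assms finite_pivotal by (simp add: order_le_neq_trans)
  then obtain k' where pair: "consecutive (PP n) k k'"
    using consecutive_Min_greater[OF finite_pivotal assms] by blast
  then have "gromov (Yc k) (Yc k') (Yp k) \<le> 3 * C0 + 5 * \<delta>"
    using pivotal_invariant[of n] unfolding pivotal_invariant_def by blast
  then show ?thesis
    using consecutive_pivotal_gromov_le[OF pair]
      gromov_le_add_gromov[of "Yc k" "Ym (Suc n)" "Yp k" "Yc k'"] delta_nonneg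
    by linarith
qed

lemma pivotal_chain:
  assumes "k \<in> PP n"
  shows "is_chain (2 * C0 + 5 * \<delta>) (D - 6 * C0 - 13 * \<delta>) [Ym k, Yc k, Ym (Suc n)]"
proof -
  have "1 \<le> k" using assms by (rule pivotal_ge_1)
  have aligned: "gromov (Ym k) (Yp k) (Yc k) \<le> C0"
    using pivotal_invariant[of n] assms unfolding pivotal_invariant_def by blast
  have far: "gromov (Yc k) (Ym (Suc n)) (Yp k) \<le> 4 * C0 + 9 * \<delta>"
    by (rule pivotal_gromov_le[OF assms])
  have "gromov (Ym k) (Ym (Suc n)) (Yc k) \<le> C0 + \<delta>"
    by (rule gromov_concat[OF hyp aligned far dist_yy_yp[OF \<open>1 \<le> k\<close>]])
       (use D_large C0_nonneg delta_nonneg in linarith)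
  moreover have "D - (4 * C0 + 9 * \<delta>) \<le> dist (Yc k) (Ym (Suc n))"
    using dist_sub_gromov_le[of "Yc k" "Yp k" "Ym (Suc n)"] dist_yy_yp[OF \<open>1 \<le> k\<close>] far
    by linarith
  ultimately show ?thesis
    using dist_ym_yy[OF \<open>1 \<le> k\<close>] C0_nonneg delta_nonneg unfolding is_chain_three by auto
qed

end

text \<open>The chain property holds at every pivotal time.\<close>

theorem lemma5p2:
  fixes \<delta> C0 D :: real and bp :: "'a::metric_space" and S :: "('a \<Rightarrow> 'a) set"
    and u a b :: "nat \<Rightarrow> 'a \<Rightarrow> 'a" and n k :: nat
  assumes "hyperbolic \<delta> TYPE('a)"
    and "0 \<le> C0"
    and "schottky (1/100) C0 D bp S"
    and "\<And>i. isometry (u i)"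
    and "\<And>i. 1 \<le> i \<Longrightarrow> a i \<in> S"
    and "\<And>i. 1 \<le> i \<Longrightarrow> b i \<in> S"
    and "D \<ge> 6 * C0 + 13 * \<delta> + 1"
    and "k \<in> pivotal \<delta> C0 bp u a b n"
    and "k \<noteq> Min (pivotal \<delta> C0 bp u a b n)"
  shows "is_chain (2 * C0 + 5 * \<delta>) (D - 6 * C0 - 13 * \<delta>)
           [ym bp u a b k, yy bp u a b k, ym bp u a b (Suc n)]"
proof -
  interpret hyperbolic_pivotal \<delta> C0 D bp u a b
    using assms(1-7) schottky_isometry[OF assms(3)] schottky_displacement[OF assms(3)]
    by unfold_locales auto
  show ?thesis by (rule pivotal_chain[OF assms(8)])
qed

end
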